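(* Let $H(u)=\sum_{n\ge0}\mathbf h_nu^n$, and for $k\ge0$ let $\prod^{\leftarrow}_{0\le j\le k}H(q^j)=H(q^k)H(q^{k-1})\cdots H(q^0)$. Then, as an identity with coefficients in $\mathbb Q[[q,t]]$, \[ \sum_{k\ge0}t^k\,H(q^k)H(q^{k-1})\cdots H(1)=\sum_{n\ge0}\frac{\sum_{L\vDash n}t^{\mathrm{des}(L)}q^{\mathrm{maj}(L)}\mathbf r_L}{(1-t)(1-tq)\cdots(1-tq^n)}, \] where for a nonempty composition $L=(L_1,\dots,L_k)$, $\mathrm{des}(L)=k-1$ and $\mathrm{maj}(L)=(k-1)L_1+(k-2)L_2+\cdots+L_{k-1}$, and for the empty composition $\mathrm{des}=\mathrm{maj}=0$ and $\mathbf r_\emptyset=1$.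
   Context: Work in formal power series in noncommuting variables $X_1,X_2,\dots$ with coefficients in $\mathbb Q[[q,t]]$ ($q,t$ commuting indeterminates commuting with the $X_i$). $\mathbf h_n=\sum_{i_1\le\cdots\le i_n}X_{i_1}\cdots X_{i_n}$, $\mathbf h_0=1$. $L\vDash n$ means $L$ is a composition of $n$. For $L=(L_1,\dots,L_k)\vDash n$, $\mathbf r_L=\sum X_{i_1}\cdots X_{i_n}$ over $(i_1,\dots,i_n)$ with $i_1\le\cdots\le i_{L_1}>i_{L_1+1}\le\cdots\le i_{L_1+L_2}>\cdots>i_{L_1+\cdots+L_{k-1}+1}\le\cdots\le i_n$. *)

theory Defs
  imports "HOL-Computational_Algebra.Formal_Power_Series"
begin

text \<open>Coefficient ring Q[[q,t]], realised as Q[[q]][[t]]: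
  the outer variable is t, the inner variable is q.\<close>
type_synonym coef = "rat fps fps"

definition tvar :: coef where "tvar = fps_X"
definition qvar :: coef where "qvar = fps_const fps_X"

text \<open>Formal power series in noncommuting variables X_1, X_2, ... :
  a word X_{i_1} ... X_{i_n} is the list [i_1,...,i_n] (letters are positive naturals);
  a series maps each word to its coefficient.\<close>
type_synonym ncs = "nat list \<Rightarrow> coef"

definition positive_word :: "nat list \<Rightarrow> bool" where
  "positive_word w \<longleftrightarrow> (\<forall>x\<in>set w. 1 \<le> x)"

definition ncmult :: "ncs \<Rightarrow> ncs \<Rightarrow> ncs" where
  "ncmult f g w = (\<Sum>i\<le>length w. f (take i w) * g (drop i w))"

definition ncsmult :: "coef \<Rightarrow> ncs \<Rightarrow> ncs" where
  "ncsmult c f w = c * f w"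

definition ncsuminf :: "(nat \<Rightarrow> ncs) \<Rightarrow> ncs" where
  "ncsuminf F w = (\<Sum>n. F n w)"

definition hser :: "nat \<Rightarrow> ncs" where
  "hser n w = (if length w = n \<and> sorted w \<and> positive_word w then 1 else 0)"

definition Hser :: "coef \<Rightarrow> ncs" where
  "Hser c = ncsuminf (\<lambda>n. ncsmult (c ^ n) (hser n))"

fun Hprod :: "nat \<Rightarrow> ncs" where
  "Hprod 0 = Hser (qvar ^ 0)"
| "Hprod (Suc k) = ncmult (Hser (qvar ^ Suc k)) (Hprod k)"

definition compositions :: "nat \<Rightarrow> nat list set" where
  "compositions n = {L. (\<forall>x\<in>set L. 1 \<le> x) \<and> sum_list L = n}"

definition des :: "nat list \<Rightarrow> nat" where
  "des L = length L - 1"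

definition maj :: "nat list \<Rightarrow> nat" where
  "maj L = (\<Sum>i<length L. (length L - 1 - i) * L ! i)"

text \<open>Descent positions prescribed by L: L_1, L_1+L_2, ..., L_1+...+L_{k-1}.\<close>
definition comp_bounds :: "nat list \<Rightarrow> nat set" where
  "comp_bounds L = {sum_list (take j L) | j. 1 \<le> j \<and> j < length L}"

text \<open>r_L: sum over words weakly increasing inside blocks of L with strict descents
  between blocks (positions 0-based: w!i > w!(i+1) exactly when i+1 is a block boundary).\<close>
definition rser :: "nat list \<Rightarrow> ncs" where
  "rser L w = (if length w = sum_list L \<and> positive_word w \<and>
       (\<forall>i. Suc i < length w \<longrightarrow> (w ! i > w ! Suc i \<longleftrightarrow> Suc i \<in> comp_bounds L))
     then 1 else 0)"

end

(*
  Fix a word w of length m and write F(w) for its coefficient on the left.  Since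
  H(q^(k+1)) ... H(q) is H(q^k) ... H(1) with every letter weighted by q, peeling off the
  factor H(1) on the right gives
    F(w) = [w weakly increasing] + t * sum_i q^i F(w_1 ... w_i) [w_(i+1) ... w_m weakly increasing],
  and only prefixes ending at or after the last descent r of w contribute.  Multiplying by
  (1 - t)(1 - tq) ... (1 - tq^m) and using induction on m, the prefix terms recombine through
  the telescoping identity
    prod_(a<=j<m) (1 - x_j) + sum_(a<=i<m) x_i prod_(i<j<m) (1 - x_j) = 1,
  leaving t^des(w) q^maj(w), where des and maj are the number and the sum of the descent
  positions of w.  On the right, r_L selects exactly the positive words whose descent set is
  the set of partial sums of L, and L |-> partial sums is a bijection from compositions of m
  onto subsets of {1, ..., m-1} carrying des and maj to cardinality and sum.
*)

theory Submission
  imports Defs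
begin

unbundle fps_syntax

lemma tendsto_fps_linear_combination:
  fixes f :: "'i \<Rightarrow> 'b \<Rightarrow> 'a::comm_ring_1 fps"
  assumes "finite I" and "\<And>i. i \<in> I \<Longrightarrow> (f i \<longlongrightarrow> S i) F"
  shows "((\<lambda>x. \<Sum>i\<in>I. c i * f i x) \<longlongrightarrow> (\<Sum>i\<in>I. c i * S i)) F"
proof (rule tendsto_fpsI)
  fix n
  have "\<forall>\<^sub>F x in F. \<forall>i\<in>I. \<forall>j\<in>{..n}. f i x $ j = S i $ j"
    using assms by (intro eventually_ball_finite ballI) (auto simp: tendsto_fps_iff)
  then show "\<forall>\<^sub>F x in F. (\<Sum>i\<in>I. c i * f i x) $ n = (\<Sum>i\<in>I. c i * S i) $ n"
    by eventually_elim (simp add: fps_sum_nth fps_mult_nth)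
qed

lemma fps_X_power_mult_sums:
  "(\<lambda>k. fps_X ^ k * a k) sums Abs_fps (\<lambda>n. \<Sum>k\<le>n. a k $ (n - k))"
  unfolding sums_def
proof (rule tendsto_fpsI)
  fix n
  have "(\<Sum>k<N. fps_X ^ k * a k) $ n = (\<Sum>k\<le>n. a k $ (n - k))" if "n < N" for N
  proof -
    have "(\<Sum>k<N. fps_X ^ k * a k) $ n = (\<Sum>k<N. if n < k then 0 else a k $ (n - k))"
      by (simp add: fps_sum_nth fps_X_power_mult_nth)
    also have "\<dots> = (\<Sum>k\<le>n. a k $ (n - k))"
      using that by (intro sum.mono_neutral_cong_right) auto
    finally show ?thesis .
  qed
  then show "\<forall>\<^sub>F N in sequentially.
      (\<Sum>k<N. fps_X ^ k * a k) $ n = Abs_fps (\<lambda>n. \<Sum>k\<le>n. a k $ (n - k)) $ n"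
    by (intro eventually_sequentiallyI[of "Suc n"]) simp
qed

lemma summable_fps_X_power_mult: "summable (\<lambda>k. fps_X ^ k * a k)"
  using fps_X_power_mult_sums by (rule sums_summable)

lemma suminf_fps_X_power_mult_nth: "(\<Sum>k. fps_X ^ k * a k) $ n = (\<Sum>k\<le>n. a k $ (n - k))"
  by (simp flip: sums_unique[OF fps_X_power_mult_sums])

lemma suminf_fps_X_power_mult_head:
  "(\<Sum>k. fps_X ^ k * a k) = a 0 + fps_X * (\<Sum>k. fps_X ^ k * a (Suc k))"
proof (rule fps_ext)
  fix n
  show "(\<Sum>k. fps_X ^ k * a k) $ n = (a 0 + fps_X * (\<Sum>k. fps_X ^ k * a (Suc k))) $ n"
    by (cases n)
      (simp_all add: suminf_fps_X_power_mult_nth sum.atMost_Suc_shift del: sum.atMost_Suc)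
qed

lemma suminf_fps_X_power_mult_linear_combination:
  fixes b :: "'i \<Rightarrow> nat \<Rightarrow> 'a::comm_ring_1 fps"
  assumes "finite I"
  shows "(\<Sum>k. fps_X ^ k * (\<Sum>i\<in>I. c i * b i k)) = (\<Sum>i\<in>I. c i * (\<Sum>k. fps_X ^ k * b i k))"
proof (rule sums_unique[symmetric])
  have "(\<Sum>k<N. fps_X ^ k * (\<Sum>i\<in>I. c i * b i k)) = (\<Sum>i\<in>I. c i * (\<Sum>k<N. fps_X ^ k * b i k))" for N
    by (simp add: sum_distrib_left sum_distrib_right mult_ac sum.swap[of _ I "{..<N}"])
  moreover have "(\<lambda>N. \<Sum>i\<in>I. c i * (\<Sum>k<N. fps_X ^ k * b i k))
      \<longlonglongrightarrow> (\<Sum>i\<in>I. c i * (\<Sum>k. fps_X ^ k * b i k))"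
    using assms summable_fps_X_power_mult by (intro tendsto_fps_linear_combination summable_LIMSEQ)
  ultimately show "(\<lambda>k. fps_X ^ k * (\<Sum>i\<in>I. c i * b i k)) sums (\<Sum>i\<in>I. c i * (\<Sum>k. fps_X ^ k * b i k))"
    by (simp add: sums_def)
qed

lemma fps_prod_one_minus_X_mult_nth_0: "(\<Prod>i\<in>A. 1 - fps_X * f i) $ 0 = (1::'a::comm_ring_1)"
  by (induction A rule: infinite_finite_induct) simp_all

lemma fps_mult_inverse_eq_1:
  fixes f :: "'a::field fps fps"
  assumes "f $ 0 = 1"
  shows "f * inverse f = 1"
proof -
  have "inverse f = fps_right_inverse f (inverse (f $ 0))"
    by (simp only: fps_inverse_def)
  also have "inverse (f $ 0) = 1"
    using assms by simp
  finally show ?thesis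
    using fps_right_inverse[of f 1] assms by simp
qed

lemma ncmult_assoc: "ncmult (ncmult f g) h = ncmult f (ncmult g h)"
proof
  fix w :: "nat list"
  let ?m = "length w"
  define c where "c j l = f (take j w) * g (take l (drop j w)) * h (drop (l + j) w)" for j l
  have inner: "ncmult f g (take i w) * h (drop i w) = (\<Sum>j\<le>i. c j (i - j))" if "i \<le> ?m" for i
    using that by (auto simp: ncmult_def c_def sum_distrib_right min_def drop_take intro!: sum.cong)
  have "ncmult (ncmult f g) h w = (\<Sum>i\<le>?m. \<Sum>j\<le>i. c j (i - j))"
    unfolding ncmult_def[of "ncmult f g"] using inner by simp
  also have "\<dots> = (\<Sum>(j, l)\<in>{(j, l). j + l \<le> ?m}. c j l)"
    by (rule sum.triangle_reindex_eq[symmetric])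
  also have "\<dots> = (\<Sum>j\<le>?m. \<Sum>l\<le>?m - j. c j l)"
    by (simp add: sum.Sigma) (intro sum.cong; force)
  also have "\<dots> = ncmult f (ncmult g h) w"
    by (simp add: ncmult_def c_def sum_distrib_left mult.assoc)
  finally show "ncmult (ncmult f g) h w = ncmult f (ncmult g h) w" .
qed

text \<open>The substitution \<open>X\<^sub>i \<mapsto> c X\<^sub>i\<close>, a ring endomorphism of noncommutative series.\<close>
definition ncdilate :: "coef \<Rightarrow> ncs \<Rightarrow> ncs" where
  "ncdilate c f w = c ^ length w * f w"

lemma ncdilate_ncmult: "ncdilate c (ncmult f g) = ncmult (ncdilate c f) (ncdilate c g)"
proof
  fix w :: "nat list"
  have "c ^ length w = c ^ length (take i w) * c ^ length (drop i w)" if "i \<le> length w" for i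
    using that by (simp flip: power_add)
  then show "ncdilate c (ncmult f g) w = ncmult (ncdilate c f) (ncdilate c g) w"
    by (simp add: ncdilate_def ncmult_def sum_distrib_left mult_ac)
qed

lemma Hser_apply: "Hser c w = c ^ length w * of_bool (sorted w \<and> positive_word w)"
proof -
  have "Hser c w = (\<Sum>n. c ^ n * hser n w)"
    by (simp add: Hser_def ncsuminf_def ncsmult_def)
  also have "\<dots> = (\<Sum>n\<in>{length w}. c ^ n * hser n w)"
    by (rule suminf_finite) (auto simp: hser_def)
  finally show ?thesis by (simp add: hser_def)
qed

lemma Hser_mult: "Hser (c * d) = ncdilate c (Hser d)"
  by (simp add: Hser_apply ncdilate_def power_mult_distrib fun_eq_iff mult_ac)

lemma Hprod_Suc_eq_ncmult: "Hprod (Suc k) = ncmult (ncdilate qvar (Hprod k)) (Hser 1)"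
proof (induction k)
  case 0
  then show ?case by (simp flip: Hser_mult)
next
  case (Suc k)
  have "Hprod (Suc (Suc k)) =
      ncmult (ncdilate qvar (Hser (qvar ^ Suc k))) (ncmult (ncdilate qvar (Hprod k)) (Hser 1))"
    using Suc.IH by (simp flip: Hser_mult)
  also have "\<dots> = ncmult (ncdilate qvar (Hprod (Suc k))) (Hser 1)"
    by (simp add: ncmult_assoc ncdilate_ncmult)
  finally show ?case .
qed

lemma Hprod_Suc_apply:
  "Hprod (Suc k) w = (\<Sum>i\<le>length w. qvar ^ i * Hser 1 (drop i w) * Hprod k (take i w))"
  unfolding Hprod_Suc_eq_ncmult
  by (auto simp: ncmult_def ncdilate_def min_def mult_ac intro!: sum.cong)

lemma positive_word_iff_take_drop:
  "positive_word w \<longleftrightarrow> positive_word (take i w) \<and> positive_word (drop i w)"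
  unfolding positive_word_def by (metis Un_iff append_take_drop_id set_append)

lemma Hprod_not_positive: "\<not> positive_word w \<Longrightarrow> Hprod k w = 0"
proof (induction k arbitrary: w)
  case 0
  then show ?case by (simp add: Hser_apply)
next
  case (Suc k)
  have "qvar ^ i * Hser 1 (drop i w) * Hprod k (take i w) = 0" for i
    using Suc positive_word_iff_take_drop[of w i] by (auto simp: Hser_apply)
  then show ?case
    unfolding Hprod_Suc_apply by (intro sum.neutral) blast
qed

definition Hprod_series :: "nat list \<Rightarrow> coef" where
  "Hprod_series w = (\<Sum>k. tvar ^ k * Hprod k w)"

lemma Hprod_series_rec:
  "Hprod_series w =
     Hser 1 w + tvar * (\<Sum>i\<le>length w. qvar ^ i * Hser 1 (drop i w) * Hprod_series (take i w))"
proof -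
  have "Hprod_series w = Hprod 0 w + fps_X * (\<Sum>k. fps_X ^ k * Hprod (Suc k) w)"
    unfolding Hprod_series_def tvar_def by (rule suminf_fps_X_power_mult_head)
  also have "(\<Sum>k. fps_X ^ k * Hprod (Suc k) w) =
      (\<Sum>k. fps_X ^ k * (\<Sum>i\<le>length w. qvar ^ i * Hser 1 (drop i w) * Hprod k (take i w)))"
    by (simp only: Hprod_Suc_apply)
  also have "\<dots> = (\<Sum>i\<le>length w. qvar ^ i * Hser 1 (drop i w) * Hprod_series (take i w))"
    unfolding Hprod_series_def tvar_def by (rule suminf_fps_X_power_mult_linear_combination) simp
  finally show ?thesis by (simp add: tvar_def)
qed

lemma Hprod_series_not_positive: "\<not> positive_word w \<Longrightarrow> Hprod_series w = 0"
  by (simp add: Hprod_series_def Hprod_not_positive del: Hprod.simps)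

text \<open>A descent at position \<open>p\<close> means \<open>w ! (p - 1) > w ! p\<close>, so positions are counted
  like the partial sums in \<^const>\<open>comp_bounds\<close>.\<close>
definition descents :: "nat list \<Rightarrow> nat set" where
  "descents w = {p. 0 < p \<and> p < length w \<and> w ! p < w ! (p - 1)}"

definition last_descent :: "nat list \<Rightarrow> nat" where
  "last_descent w = Max (insert 0 (descents w))"

definition descent_weight :: "nat list \<Rightarrow> coef" where
  "descent_weight w = tvar ^ card (descents w) * qvar ^ \<Sum>(descents w)"

lemma finite_descents: "finite (descents w)"
  by (rule finite_subset[of _ "{..<length w}"]) (auto simp: descents_def)

lemma descents_take: "descents (take i w) = {p \<in> descents w. p < i}"
  by (auto simp: descents_def)

lemma le_last_descent: "p \<in> descents w \<Longrightarrow> p \<le> last_descent w"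
  by (simp add: last_descent_def finite_descents)

lemma last_descent_in_descents: "0 < last_descent w \<Longrightarrow> last_descent w \<in> descents w"
  using Max_in[of "insert 0 (descents w)"] by (auto simp: last_descent_def finite_descents)

lemma last_descent_eq_0_iff: "last_descent w = 0 \<longleftrightarrow> descents w = {}"
proof
  assume "last_descent w = 0"
  then show "descents w = {}"
    using le_last_descent[of _ w] by (fastforce simp: descents_def)
qed (simp add: last_descent_def)

lemma last_descent_less_length: "0 < last_descent w \<Longrightarrow> last_descent w < length w"
  using last_descent_in_descents by (auto simp: descents_def)

lemma sorted_drop_iff_last_descent_le: "sorted (drop i w) \<longleftrightarrow> last_descent w \<le> i"
proof
  assume sorted: "sorted (drop i w)"
  have "p \<le> i" if p: "p \<in> descents w" for p
  proof (rule ccontr)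
    assume "\<not> p \<le> i"
    then have "Suc (p - 1 - i) < length (drop i w)"
      using p by (auto simp: descents_def)
    then have "drop i w ! (p - 1 - i) \<le> drop i w ! Suc (p - 1 - i)"
      using sorted by (simp only: sorted_iff_nth_Suc)
    moreover have "i + (p - 1 - i) = p - 1" "i + Suc (p - 1 - i) = p"
      using \<open>\<not> p \<le> i\<close> by auto
    ultimately show False
      using p by (simp add: descents_def)
  qed
  then show "last_descent w \<le> i"
    using last_descent_in_descents[of w] by (cases "last_descent w = 0") auto
next
  assume "last_descent w \<le> i"
  show "sorted (drop i w)"
    unfolding sorted_iff_nth_Suc
  proof (intro allI impI)
    fix j assume j: "Suc j < length (drop i w)"
    have "Suc (i + j) \<notin> descents w"
      using \<open>last_descent w \<le> i\<close> le_last_descent[of "Suc (i + j)" w] by auto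
    then show "drop i w ! j \<le> drop i w ! Suc j"
      using j by (auto simp: descents_def)
  qed
qed

lemma descent_weight_take:
  "last_descent w < i \<Longrightarrow> descent_weight (take i w) = descent_weight w"
proof -
  assume "last_descent w < i"
  then have "descents (take i w) = descents w"
    using le_last_descent[of _ w] by (force simp: descents_take)
  then show ?thesis by (simp add: descent_weight_def)
qed

lemma descent_weight_take_last_descent:
  assumes "0 < last_descent w"
  shows "descent_weight w = tvar * qvar ^ last_descent w * descent_weight (take (last_descent w) w)"
proof -
  let ?r = "last_descent w"
  have "descents w = insert ?r (descents (take ?r w))" and "?r \<notin> descents (take ?r w)"
    using last_descent_in_descents[OF assms] le_last_descent[of _ w]
    by (auto simp: descents_take order.not_eq_order_implies_strict)
  then show ?thesis
    by (simp add: descent_weight_def finite_descents power_add mult_ac)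
qed

lemma prod_one_minus_telescope:
  fixes x :: "nat \<Rightarrow> 'a::comm_ring_1"
  assumes "a \<le> m"
  shows "(\<Prod>j\<in>{a..<m}. 1 - x j) + (\<Sum>i\<in>{a..<m}. x i * (\<Prod>j\<in>{Suc i..<m}. 1 - x j)) = 1"
  using assms
proof (induction a rule: inc_induct)
  case (step a)
  then show ?case
    by (simp add: prod.atLeast_Suc_lessThan sum.atLeast_Suc_lessThan algebra_simps)
qed simp

lemma Hser_one_drop:
  "positive_word w \<Longrightarrow> Hser 1 (drop i w) = of_bool (last_descent w \<le> i)"
  by (simp add: Hser_apply sorted_drop_iff_last_descent_le positive_word_iff_take_drop[of w i])

lemma Hprod_series_mult_one_minus:
  assumes "positive_word w"
  shows "Hprod_series w * (1 - tvar * qvar ^ length w) =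
    of_bool (last_descent w = 0) +
    (\<Sum>i\<in>{last_descent w..<length w}. tvar * qvar ^ i * Hprod_series (take i w))"
proof -
  let ?r = "last_descent w" and ?m = "length w"
  have "?r \<le> ?m"
    using last_descent_less_length[of w] by (cases "?r = 0") auto
  have "(\<Sum>i\<le>?m. qvar ^ i * Hser 1 (drop i w) * Hprod_series (take i w))
      = (\<Sum>i\<in>{?r..?m}. qvar ^ i * Hprod_series (take i w))"
    using assms by (intro sum.mono_neutral_cong_right) (auto simp: Hser_one_drop)
  also have "\<dots> = (\<Sum>i\<in>{?r..<?m}. qvar ^ i * Hprod_series (take i w)) + qvar ^ ?m * Hprod_series w"
    using \<open>?r \<le> ?m\<close> by (simp add: sum.last_plus add.commute)
  finally have rec: "Hprod_series w = of_bool (?r = 0) +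
      tvar * ((\<Sum>i\<in>{?r..<?m}. qvar ^ i * Hprod_series (take i w)) + qvar ^ ?m * Hprod_series w)"
    using Hprod_series_rec[of w] Hser_one_drop[OF assms, of 0] by simp
  have "Hprod_series w * (1 - tvar * qvar ^ ?m) =
      Hprod_series w - tvar * qvar ^ ?m * Hprod_series w"
    by (simp add: algebra_simps)
  also have "\<dots> = of_bool (?r = 0) + tvar * (\<Sum>i\<in>{?r..<?m}. qvar ^ i * Hprod_series (take i w))"
    by (subst (1) rec) (simp add: algebra_simps)
  finally show ?thesis
    by (simp add: sum_distrib_left mult.assoc)
qed

lemma Hprod_series_mult_prod:
  "positive_word w \<Longrightarrow> Hprod_series w * (\<Prod>i\<le>length w. 1 - tvar * qvar ^ i) = descent_weight w"
proof (induction "length w" arbitrary: w rule: less_induct)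
  case less
  let ?r = "last_descent w" and ?m = "length w" and ?x = "\<lambda>j. tvar * qvar ^ j"
  define Q where "Q a = (\<Prod>j\<in>{a..<?m}. 1 - ?x j)" for a
  have Q_split: "(\<Prod>j\<le>i. 1 - ?x j) * Q (Suc i) = Q 0" if "i < ?m" for i
    using that unfolding Q_def atLeast0AtMost[symmetric] atLeastLessThanSuc_atLeastAtMost[symmetric]
    by (intro prod.atLeastLessThan_concat) auto
  have IH: "Hprod_series (take i w) * Q 0 = descent_weight (take i w) * Q (Suc i)" if "i < ?m" for i
  proof -
    have "Hprod_series (take i w) * Q 0 =
        Hprod_series (take i w) * (\<Prod>j\<le>i. 1 - ?x j) * Q (Suc i)"
      by (simp only: Q_split[OF that, symmetric] mult.assoc)
    also have "Hprod_series (take i w) * (\<Prod>j\<le>i. 1 - ?x j) = descent_weight (take i w)"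
      using less.hyps[of "take i w"] less.prems that positive_word_iff_take_drop[of w i]
      by (simp add: min_def)
    finally show ?thesis .
  qed
  have "Hprod_series w * (\<Prod>i\<le>?m. 1 - ?x i) = Hprod_series w * (1 - ?x ?m) * Q 0"
    by (simp add: Q_def atLeast0LessThan lessThan_Suc_atMost[symmetric] mult_ac
        del: lessThan_Suc_atMost)
  also have "\<dots> = of_bool (?r = 0) * Q 0 + (\<Sum>i\<in>{?r..<?m}. ?x i * (Hprod_series (take i w) * Q 0))"
    by (simp add: Hprod_series_mult_one_minus[OF less.prems] distrib_right sum_distrib_right
        mult.assoc)
  also have "\<dots> = of_bool (?r = 0) * Q 0 +
      (\<Sum>i\<in>{?r..<?m}. ?x i * descent_weight (take i w) * Q (Suc i))"
    using IH by (intro arg_cong2[where f = "(+)"] sum.cong) (auto simp: mult.assoc)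
  also have "\<dots> = descent_weight w"
  proof (cases "?r = 0")
    case True
    then have "descents w = {}"
      by (simp add: last_descent_eq_0_iff)
    then have "descent_weight (take i w) = 1" for i
      by (simp add: descent_weight_def descents_take)
    then show ?thesis
      using prod_one_minus_telescope[of 0 ?m ?x] True \<open>descents w = {}\<close>
      by (simp add: Q_def descent_weight_def)
  next
    case False
    then have "?r < ?m"
      by (simp add: last_descent_less_length)
    then have "(\<Sum>i\<in>{?r..<?m}. ?x i * descent_weight (take i w) * Q (Suc i))
        = descent_weight w * (Q (Suc ?r) + (\<Sum>i\<in>{Suc ?r..<?m}. ?x i * Q (Suc i)))"
      using False
      by (simp add: sum.atLeast_Suc_lessThan descent_weight_take descent_weight_take_last_descent
          sum_distrib_left algebra_simps)
    then show ?thesis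
      using prod_one_minus_telescope[of "Suc ?r" ?m ?x] \<open>?r < ?m\<close> False by (simp add: Q_def)
  qed
  finally show ?case .
qed

lemma snoc_mem_compositions:
  "L @ [a] \<in> compositions n \<longleftrightarrow> L \<in> compositions (sum_list L) \<and> 1 \<le> a \<and> n = sum_list L + a"
  by (auto simp: compositions_def)

lemma compositions_0: "compositions 0 = {[]}"
proof -
  have "L = []" if "\<forall>x\<in>set L. 1 \<le> x" "sum_list L = 0" for L :: "nat list"
    using that by (cases L) auto
  then show ?thesis
    by (auto simp: compositions_def)
qed

lemma nonempty_composition_pos: "L \<in> compositions n \<Longrightarrow> L \<noteq> [] \<Longrightarrow> 0 < n"
  by (cases L) (auto simp: compositions_def)

lemma comp_bounds_Nil: "comp_bounds [] = {}"
  and comp_bounds_singleton: "comp_bounds [a] = {}"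
  by (simp_all add: comp_bounds_def)

lemma comp_bounds_snoc:
  "comp_bounds (L @ [a]) = comp_bounds L \<union> (if L = [] then {} else {sum_list L})"
proof -
  have "take j (L @ [a]) = take j L" if "j \<le> length L" for j
    using that by simp
  then have "comp_bounds (L @ [a]) = {sum_list (take j L) | j. 1 \<le> j \<and> j \<le> length L}"
    unfolding comp_bounds_def by (auto simp: less_Suc_eq_le) (rule exI, auto)
  also have "\<dots> = comp_bounds L \<union> (if L = [] then {} else {sum_list L})"
    unfolding comp_bounds_def
    by (auto simp: le_less) (rule exI[of _ "length L"], auto simp: Suc_lessI)
  finally show ?thesis .
qed

lemma comp_bounds_subset: "L \<in> compositions n \<Longrightarrow> comp_bounds L \<subseteq> {1..<n}"
proof (induction L arbitrary: n rule: rev_induct)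
  case (snoc a L)
  then have "comp_bounds L \<subseteq> {1..<sum_list L}" and "n = sum_list L + a" and "1 \<le> a"
    by (simp_all add: snoc_mem_compositions)
  moreover have "L \<noteq> [] \<Longrightarrow> 0 < sum_list L"
    using snoc.prems by (auto simp: snoc_mem_compositions intro: nonempty_composition_pos)
  ultimately show ?case
    by (auto simp: comp_bounds_snoc)
qed (simp add: comp_bounds_Nil)

lemma total_notin_comp_bounds: "L \<in> compositions n \<Longrightarrow> n \<notin> comp_bounds L"
  using comp_bounds_subset by fastforce

lemma maj_snoc: "maj (L @ [a]) = maj L + sum_list L"
proof -
  let ?k = "length L"
  have "maj (L @ [a]) = (\<Sum>i<?k. (?k - i) * L ! i)"
    by (simp add: maj_def nth_append)
  also have "\<dots> = (\<Sum>i<?k. (?k - 1 - i) * L ! i + L ! i)"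
  proof (intro sum.cong refl)
    fix i assume "i \<in> {..<?k}"
    then have "?k - i = Suc (?k - 1 - i)" by auto
    then show "(?k - i) * L ! i = (?k - 1 - i) * L ! i + L ! i" by simp
  qed
  also have "\<dots> = maj L + sum_list L"
    by (simp add: maj_def sum.distrib sum_list_sum_nth atLeast0LessThan)
  finally show ?thesis .
qed

lemma card_comp_bounds: "L \<in> compositions n \<Longrightarrow> card (comp_bounds L) = des L"
proof (induction L arbitrary: n rule: rev_induct)
  case (snoc a L)
  then have "L \<in> compositions (sum_list L)"
    by (simp add: snoc_mem_compositions)
  then show ?case
    using snoc.IH total_notin_comp_bounds finite_subset[OF comp_bounds_subset]
    by (cases "L = []") (auto simp: comp_bounds_snoc des_def comp_bounds_singleton)
qed (simp add: comp_bounds_Nil des_def)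

lemma sum_comp_bounds: "L \<in> compositions n \<Longrightarrow> \<Sum>(comp_bounds L) = maj L"
proof (induction L arbitrary: n rule: rev_induct)
  case (snoc a L)
  then have L: "L \<in> compositions (sum_list L)"
    by (simp add: snoc_mem_compositions)
  show ?case
  proof (cases "L = []")
    case True
    then show ?thesis by (simp add: comp_bounds_singleton maj_def)
  next
    case False
    then show ?thesis
      using snoc.IH[OF L] total_notin_comp_bounds[OF L] finite_subset[OF comp_bounds_subset[OF L]]
      by (simp add: comp_bounds_snoc maj_snoc)
  qed
qed (simp add: comp_bounds_Nil maj_def)

lemma Max_insert_0_comp_bounds_snoc:
  assumes "L @ [a] \<in> compositions n"
  shows "Max (insert 0 (comp_bounds (L @ [a]))) = sum_list L"
proof -
  have "comp_bounds L \<subseteq> {1..<sum_list L}"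
    using assms by (intro comp_bounds_subset) (simp add: snoc_mem_compositions)
  moreover have "L = [] \<Longrightarrow> sum_list L = 0"
    by simp
  ultimately show ?thesis
    using finite_subset[of "comp_bounds L" "{1..<sum_list L}"]
    by (intro Max_eqI) (auto simp: comp_bounds_snoc split: if_splits)
qed

lemma comp_bounds_inj:
  "L \<in> compositions n \<Longrightarrow> L' \<in> compositions n \<Longrightarrow> comp_bounds L = comp_bounds L' \<Longrightarrow> L = L'"
proof (induction L arbitrary: n L' rule: rev_induct)
  case Nil
  then have "n = 0"
    by (simp add: compositions_def)
  then show ?case
    using Nil.prems by (simp add: compositions_0)
next
  case (snoc a L)
  have "0 < n"
    using snoc.prems(1) by (rule nonempty_composition_pos) simp
  then have "L' \<noteq> []"
    using snoc.prems(2) by (auto simp: compositions_def)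
  then obtain K b where L': "L' = K @ [b]"
    by (metis rev_exhaust)
  have "sum_list L = Max (insert 0 (comp_bounds (L @ [a])))"
    using Max_insert_0_comp_bounds_snoc[OF snoc.prems(1)] by simp
  also have "\<dots> = sum_list K"
    using Max_insert_0_comp_bounds_snoc[of K b n] snoc.prems(2,3) unfolding L' by simp
  finally have "sum_list L = sum_list K" .
  moreover have "comp_bounds L = comp_bounds K"
    using snoc.prems total_notin_comp_bounds[of L "sum_list L"]
      total_notin_comp_bounds[of K "sum_list K"] \<open>sum_list L = sum_list K\<close>
    unfolding L' comp_bounds_snoc
    by (auto simp: snoc_mem_compositions insert_ident split: if_splits)
  ultimately show ?case
    using snoc.IH[of "sum_list L" K] snoc.prems unfolding L' by (simp add: snoc_mem_compositions)
qed

lemma ex_composition_comp_bounds: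
  "D \<subseteq> {1..<n} \<Longrightarrow> \<exists>L\<in>compositions n. comp_bounds L = D"
proof (induction n arbitrary: D rule: less_induct)
  case (less n)
  show ?case
  proof (cases "D = {}")
    case True
    have "(if n = 0 then [] else [n]) \<in> compositions n"
      by (simp add: compositions_def)
    moreover have "comp_bounds (if n = 0 then [] else [n]) = {}"
      by (simp add: comp_bounds_Nil comp_bounds_singleton)
    ultimately show ?thesis
      using True by blast
  next
    case False
    define d where "d = Max D"
    have "finite D"
      using less.prems finite_subset by blast
    then have "d \<in> D" and d_max: "\<forall>p\<in>D. p \<le> d"
      using False by (simp_all add: d_def)
    then have "1 \<le> d" "d < n" and "D - {d} \<subseteq> {1..<d}"
      using less.prems d_max by fastforce+
    then obtain L where L: "L \<in> compositions d" "comp_bounds L = D - {d}"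
      using less.IH[of d "D - {d}"] by blast
    then have "L \<noteq> []"
      using \<open>1 \<le> d\<close> by (auto simp: compositions_def)
    then have "comp_bounds (L @ [n - d]) = D"
      using L \<open>d \<in> D\<close> by (auto simp: comp_bounds_snoc compositions_def)
    moreover have "L @ [n - d] \<in> compositions n"
      using L \<open>d < n\<close> by (auto simp: compositions_def)
    ultimately show ?thesis
      by blast
  qed
qed

lemma bij_betw_comp_bounds: "bij_betw comp_bounds (compositions n) (Pow {1..<n})"
proof (rule bij_betwI')
  show "comp_bounds L = comp_bounds L' \<longleftrightarrow> L = L'"
    if "L \<in> compositions n" "L' \<in> compositions n" for L L'
    using comp_bounds_inj[OF that] by blast
  show "comp_bounds L \<in> Pow {1..<n}" if "L \<in> compositions n" for L
    using comp_bounds_subset[OF that] by simp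
  show "\<exists>L\<in>compositions n. D = comp_bounds L" if "D \<in> Pow {1..<n}" for D
    using ex_composition_comp_bounds[of D n] that by auto
qed

lemma rser_eq_of_bool:
  assumes "L \<in> compositions (length w)"
  shows "rser L w = of_bool (positive_word w \<and> comp_bounds L = descents w)"
proof -
  let ?desc_at = "\<lambda>i. Suc i < length w \<longrightarrow> (w ! Suc i < w ! i \<longleftrightarrow> Suc i \<in> comp_bounds L)"
  have bounds: "comp_bounds L \<subseteq> {1..<length w}"
    using assms by (rule comp_bounds_subset)
  have "(\<forall>i. ?desc_at i) \<longleftrightarrow> comp_bounds L = descents w"
  proof
    assume desc: "\<forall>i. ?desc_at i"
    show "comp_bounds L = descents w"
    proof (intro set_eqI)
      fix p
      show "p \<in> comp_bounds L \<longleftrightarrow> p \<in> descents w"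
      proof (cases p)
        case (Suc i)
        then show ?thesis
          using bounds desc[rule_format, of i] by (auto simp: descents_def)
      qed (use bounds in \<open>auto simp: descents_def\<close>)
    qed
  next
    assume "comp_bounds L = descents w"
    then show "\<forall>i. ?desc_at i"
      by (auto simp: descents_def)
  qed
  then show ?thesis
    using assms by (simp add: rser_def compositions_def)
qed

lemma sum_compositions_rser:
  "(\<Sum>L\<in>compositions (length w). tvar ^ des L * qvar ^ maj L * rser L w)
     = of_bool (positive_word w) * descent_weight w"
proof -
  define g where "g D = of_bool (positive_word w \<and> D = descents w) * tvar ^ card D * qvar ^ \<Sum>D"
    for D
  have "(\<Sum>L\<in>compositions (length w). tvar ^ des L * qvar ^ maj L * rser L w)
      = (\<Sum>L\<in>compositions (length w). g (comp_bounds L))"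
    by (intro sum.cong refl)
      (simp add: g_def rser_eq_of_bool card_comp_bounds sum_comp_bounds mult_ac)
  also have "\<dots> = (\<Sum>D\<in>Pow {1..<length w}. g D)"
    by (rule sum.reindex_bij_betw[OF bij_betw_comp_bounds])
  also have "\<dots> = (\<Sum>D\<in>{descents w}. g D)"
    by (intro sum.mono_neutral_right) (auto simp: g_def descents_def)
  also have "\<dots> = of_bool (positive_word w) * descent_weight w"
    by (simp add: g_def descent_weight_def mult.assoc)
  finally show ?thesis .
qed

lemma ncsuminf_Hprod_apply:
  "ncsuminf (\<lambda>k. ncsmult (tvar ^ k) (Hprod k)) w = Hprod_series w"
  by (simp add: ncsuminf_def ncsmult_def Hprod_series_def)

lemma ncsuminf_rser_apply:
  "ncsuminf (\<lambda>n. ncsmult (inverse (\<Prod>i\<le>n. 1 - tvar * qvar ^ i))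
       (\<lambda>w. \<Sum>L\<in>compositions n. tvar ^ des L * qvar ^ maj L * rser L w)) w
   = inverse (\<Prod>i\<le>length w. 1 - tvar * qvar ^ i) * (of_bool (positive_word w) * descent_weight w)"
proof -
  have "(\<Sum>n. inverse (\<Prod>i\<le>n. 1 - tvar * qvar ^ i) *
          (\<Sum>L\<in>compositions n. tvar ^ des L * qvar ^ maj L * rser L w))
    = (\<Sum>n\<in>{length w}. inverse (\<Prod>i\<le>n. 1 - tvar * qvar ^ i) *
          (\<Sum>L\<in>compositions n. tvar ^ des L * qvar ^ maj L * rser L w))"
    by (rule suminf_finite) (auto simp: rser_def compositions_def intro!: sum.neutral)
  then show ?thesis
    by (simp add: ncsuminf_def ncsmult_def sum_compositions_rser)
qed

lemma Hprod_series_eq: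
  "Hprod_series w =
     inverse (\<Prod>i\<le>length w. 1 - tvar * qvar ^ i) * (of_bool (positive_word w) * descent_weight w)"
proof (cases "positive_word w")
  case True
  let ?P = "\<Prod>i\<le>length w. 1 - tvar * qvar ^ i"
  have "?P * inverse ?P = 1"
    by (rule fps_mult_inverse_eq_1) (simp add: tvar_def mult.assoc fps_prod_one_minus_X_mult_nth_0)
  then have "Hprod_series w = Hprod_series w * ?P * inverse ?P"
    by (simp add: mult.assoc)
  also have "\<dots> = inverse ?P * descent_weight w"
    by (simp only: Hprod_series_mult_prod[OF True] mult.commute)
  finally show ?thesis
    using True by simp
qed (simp add: Hprod_series_not_positive)

theorem lemma17:
  shows "ncsuminf (\<lambda>k. ncsmult (tvar ^ k) (Hprod k)) =
    ncsuminf (\<lambda>n. ncsmult (inverse (\<Prod>i\<le>n. 1 - tvar * qvar ^ i))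
       (\<lambda>w. \<Sum>L\<in>compositions n. tvar ^ des L * qvar ^ maj L * rser L w))"
  by (rule ext) (simp only: ncsuminf_Hprod_apply ncsuminf_rser_apply Hprod_series_eq)

end
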